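(* For $\tau$ in the upper half plane and $z\in\mathbb{C}$, with $q=e^{2\pi i\tau}$, $y=e^{2\pi i z}$ (and $q^{s}=e^{2\pi i s\tau}$), $$\theta_3(z|3\tau)^3+q^{1/2}y\,\theta_3(z+\tau|3\tau)^3+q^{2}y^{2}\,\theta_3(z+2\tau|3\tau)^3=a(\tau)\,\theta_3(z|\tau),$$ where $$a(\tau):=\frac{1}{\eta(\tau)}\sum_{n\in\mathbb{Z}}(-1)^n(6n+1)\,q^{(6n+1)^2/24}=\sum_{k,l\in\mathbb{Z}}q^{k^2+kl+l^2}$$ (in particular the two expressions for $a(\tau)$ are equal).
   Context: $\theta_3(z|\tau)=\sum_{n\in\mathbb{Z}}q^{n^2/2}y^n$ with $q^{s}=e^{2\pi i s\tau}$, $y=e^{2\pi i z}$. $\eta(\tau)=q^{1/24}\prod_{n\ge1}(1-q^n)$. *)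

theory Defs
  imports "HOL-Analysis.Analysis"
begin

definition qpow :: "complex \<Rightarrow> complex \<Rightarrow> complex" where
  "qpow tau s = exp (2 * pi * \<i> * s * tau)"

definition theta3 :: "complex \<Rightarrow> complex \<Rightarrow> complex" where
  "theta3 z tau = (\<Sum>\<^sub>\<infinity>n::int. qpow tau (of_int n ^ 2 / 2) * exp (2 * pi * \<i> * of_int n * z))"

definition dedekind_eta :: "complex \<Rightarrow> complex" where
  "dedekind_eta tau = qpow tau (1/24) * (\<Prod>n. 1 - qpow tau (of_nat (Suc n)))"

definition a_eta :: "complex \<Rightarrow> complex" where
  "a_eta tau = (1 / dedekind_eta tau) *
     (\<Sum>\<^sub>\<infinity>n::int. (-1) ^ nat \<bar>n\<bar> * of_int (6*n+1) * qpow tau (of_int ((6*n+1)^2) / 24))"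

definition a_lattice :: "complex \<Rightarrow> complex" where
  "a_lattice tau = (\<Sum>\<^sub>\<infinity>(k::int,l::int). qpow tau (of_int (k^2 + k*l + l^2)))"

end

(*
  Write theta(L, M) = sum_n exp (n^2 L + n M), so that theta_3(z|tau) = theta(pi i tau, 2 pi i z).
  The product theta(L, M) a(tau), with a(tau) the theta series of the hexagonal lattice, is a sum
  over Z x Z^2 of the exponential of N^2 L + N M + 2 (k^2 + k l + l^2) L. A linear change of
  variables Z x Z^2 = {0,1,2} x Z^3 splits this quadratic form into three copies of 3 n^2 L plus
  terms depending only on the residue j, and summing gives the cubic identity with a(tau) as
  coefficient.

  Weighting the same computation by N gives a companion identity for theta' = sum_n n exp (...).
  At the half period z = (tau + 1)/2 the functional equations of theta collapse it to
  T^2 (T + 6 D) = theta'(pi i tau, pi i tau + pi i) a(tau), with T, D the values of theta and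
  theta' at (3 pi i tau, pi i tau + pi i). The Jacobi triple product, proved from its finite
  form, yields T = prod (1 - q^n) (Euler's pentagonal theorem) and, after differentiation,
  theta'(pi i tau, pi i tau + pi i) = prod (1 - q^n)^3 (Jacobi). Hence T + 6 D = prod (1 - q^n) a(tau),
  and T + 6 D is q^(-1/24) times the numerator of the eta expression for a(tau).
*)
theory Submission
  imports Defs
begin

section \<open>Absolutely summable Gaussian series\<close>

lemma summable_linear_times_gaussian:
  fixes a b :: real
  assumes a0: "0 \<le> a" and a1: "a < 1" and b0: "0 \<le> b"
  shows "summable (\<lambda>n::nat. (real n + 1) * a ^ (n * n) * b ^ n)"
proof -
  have "(\<lambda>n. a ^ n * b) \<longlonglongrightarrow> 0 * b"
    by (intro tendsto_intros LIMSEQ_power_zero) (use a0 a1 in auto)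
  then obtain M where M: "\<And>n. n \<ge> M \<Longrightarrow> a ^ n * b < 1/4"
    by (metis (no_types, lifting) eventually_sequentially order_tendstoD(2) mult_zero_left
        zero_less_divide_1_iff zero_less_numeral)
  show ?thesis
  proof (rule summable_comparison_test_ev)
    show "summable (\<lambda>n. (1/2::real) ^ n)"
      by (rule summable_geometric) auto
    show "eventually (\<lambda>n. norm ((real n + 1) * a ^ (n * n) * b ^ n) \<le> (1/2) ^ n) sequentially"
      unfolding eventually_sequentially
    proof (intro exI allI impI)
      fix n assume "n \<ge> M"
      have lin: "real n + 1 \<le> 2 ^ n"
        using less_exp[of n] by (metis Suc_leI of_nat_Suc of_nat_le_iff of_nat_numeral
            of_nat_power add.commute)
      have "a ^ (n * n) * b ^ n = (a ^ n * b) ^ n"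
        by (simp add: power_mult power_mult_distrib)
      also have "\<dots> \<le> (1/4) ^ n"
        using M[OF \<open>n \<ge> M\<close>] by (intro power_mono) (use a0 b0 in auto)
      finally have "(real n + 1) * (a ^ (n * n) * b ^ n) \<le> 2 ^ n * (1/4) ^ n"
        by (intro mult_mono lin) (use a0 b0 in auto)
      also have "\<dots> = (1/2) ^ n"
        by (simp add: power_mult_distrib[symmetric])
      finally show "norm ((real n + 1) * a ^ (n * n) * b ^ n) \<le> (1/2) ^ n"
        using a0 b0 by (simp add: mult.assoc)
    qed
  qed
qed

lemma norm_summable_on_intI:
  fixes g :: "int \<Rightarrow> 'a::banach"
  assumes "summable (\<lambda>n. norm (g (int n)))" and "summable (\<lambda>n. norm (g (- int n)))"
  shows "(\<lambda>n. norm (g n)) summable_on UNIV"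
proof -
  have "(\<lambda>n. norm (g n)) summable_on range int"
    by (subst summable_on_reindex)
      (use assms(1) in \<open>auto simp: o_def intro!: norm_summable_imp_summable_on\<close>)
  moreover have "(\<lambda>n. norm (g n)) summable_on range (\<lambda>n::nat. - int n)"
    by (subst summable_on_reindex)
      (use assms(2) in \<open>auto simp: o_def inj_on_def intro!: norm_summable_imp_summable_on\<close>)
  ultimately have "(\<lambda>n. norm (g n)) summable_on (range int \<union> range (\<lambda>n::nat. - int n))"
    by (rule summable_on_union)
  also have "range int \<union> range (\<lambda>n::nat. - int n) = UNIV"
    by (auto intro: int_cases2[of x "x \<in> range int" for x])
  finally show ?thesis .
qed

lemma gaussian_series_abs_summable:
  fixes x y :: complex and w :: "int \<Rightarrow> complex"
  assumes x: "norm x < 1" and y: "y \<noteq> 0" and w: "\<And>n. norm (w n) \<le> 1 + of_int \<bar>n\<bar>"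
  shows "(\<lambda>n. norm (w n * x powi (n^2) * y powi n)) summable_on UNIV"
proof -
  have half: "summable (\<lambda>m::nat. norm (v m * x powi (int m ^ 2) * u powi int m))"
    if "u \<noteq> 0" and v: "\<And>m. norm (v m) \<le> real m + 1" for u :: complex and v
  proof (rule summable_comparison_test')
    show "summable (\<lambda>m::nat. (real m + 1) * norm x ^ (m * m) * norm u ^ m)"
      by (rule summable_linear_times_gaussian) (use x in auto)
    fix m :: nat
    have "x powi (int m ^ 2) = x ^ (m * m)"
      by (simp add: power2_eq_square flip: power_int_of_nat)
    then have "norm (norm (v m * x powi (int m ^ 2) * u powi int m))
        = norm (v m) * (norm x ^ (m * m) * norm u ^ m)"
      by (simp add: norm_mult norm_power)
    also have "\<dots> \<le> (real m + 1) * (norm x ^ (m * m) * norm u ^ m)"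
      by (intro mult_right_mono v) auto
    finally show "norm (norm (v m * x powi (int m ^ 2) * u powi int m))
        \<le> (real m + 1) * norm x ^ (m * m) * norm u ^ m"
      by (simp add: mult.assoc)
  qed
  show ?thesis
  proof (rule norm_summable_on_intI)
    show "summable (\<lambda>m. norm (w (int m) * x powi (int m ^ 2) * y powi int m))"
    proof (rule half[OF y])
      show "norm (w (int m)) \<le> real m + 1" for m
        using w[of "int m"] by simp
    qed
    have "summable (\<lambda>m. norm (w (- int m) * x powi (int m ^ 2) * inverse y powi int m))"
    proof (rule half)
      show "norm (w (- int m)) \<le> real m + 1" for m
        using w[of "- int m"] by simp
    qed (use y in simp)
    then show "summable (\<lambda>m. norm (w (- int m) * x powi ((- int m) ^ 2) * y powi (- int m)))"
      by (simp add: power_int_minus power_inverse)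
  qed
qed

lemma norm_summable_on_times:
  fixes f g :: "_ \<Rightarrow> 'c::{banach, real_normed_div_algebra}"
  assumes f: "(\<lambda>i. norm (f i)) summable_on A" and g: "(\<lambda>j. norm (g j)) summable_on B"
  shows "(\<lambda>p. norm (case p of (i, j) \<Rightarrow> f i * g j)) summable_on (A \<times> B)"
proof -
  have "(\<lambda>p. norm (case p of (i, j) \<Rightarrow> f i * g j)) summable_on Sigma A (\<lambda>_. B)"
  proof (rule iffD2[OF Infinite_Sum.abs_summable_on_Sigma_iff], intro conjI ballI)
    show "(\<lambda>j. norm (case (i, j) of (i, j) \<Rightarrow> f i * g j)) summable_on B" for i
      using summable_on_cmult_right[OF g, of "norm (f i)"] by (simp add: norm_mult)
    have "(\<lambda>i. norm (f i) * infsum (\<lambda>j. norm (g j)) B) summable_on A"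
      using summable_on_cmult_left[OF f] by simp
    then show "(\<lambda>i. norm (\<Sum>\<^sub>\<infinity>j\<in>B. norm (case (i, j) of (i, j) \<Rightarrow> f i * g j))) summable_on A"
      by (simp add: norm_mult infsum_cmult_right' infsum_nonneg)
  qed
  then show ?thesis
    by simp
qed

lemma has_sum_times:
  fixes f g :: "_ \<Rightarrow> 'c::{banach, real_normed_div_algebra}"
  assumes f: "(\<lambda>i. norm (f i)) summable_on A" and g: "(\<lambda>j. norm (g j)) summable_on B"
  shows "((\<lambda>(i, j). f i * g j) has_sum (infsum f A * infsum g B)) (A \<times> B)"
proof (rule has_sum_SigmaI[where g = "\<lambda>i. f i * infsum g B"])
  have fs: "f summable_on A" and gs: "g summable_on B"
    using f g abs_summable_summable by blast+
  show "((\<lambda>j. case (i, j) of (i, j) \<Rightarrow> f i * g j) has_sum f i * infsum g B) B" for i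
    using has_sum_cmult_right[OF has_sum_infsum[OF gs]] by simp
  show "((\<lambda>i. f i * infsum g B) has_sum infsum f A * infsum g B) A"
    using has_sum_cmult_left[OF has_sum_infsum[OF fs]] by simp
  show "(\<lambda>(i, j). f i * g j) summable_on Sigma A (\<lambda>_. B)"
    using abs_summable_summable[OF norm_summable_on_times[OF f g]] by simp
qed

lemma has_sum_times3:
  fixes f g h :: "_ \<Rightarrow> 'c::{banach, real_normed_div_algebra}"
  assumes f: "(\<lambda>i. norm (f i)) summable_on A" and g: "(\<lambda>i. norm (g i)) summable_on B"
    and h: "(\<lambda>i. norm (h i)) summable_on C"
  shows "((\<lambda>(a, b, c). f a * g b * h c) has_sum (infsum f A * infsum g B * infsum h C))
           (A \<times> B \<times> C)"
proof -
  have "((\<lambda>(a, p). f a * (case p of (b, c) \<Rightarrow> g b * h c))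
      has_sum (infsum f A * infsum (\<lambda>(b, c). g b * h c) (B \<times> C))) (A \<times> (B \<times> C))"
    by (rule has_sum_times[OF f]) (use norm_summable_on_times[OF g h] in simp)
  moreover have "infsum (\<lambda>(b, c). g b * h c) (B \<times> C) = infsum g B * infsum h C"
    using infsumI[OF has_sum_times[OF g h]] .
  ultimately show ?thesis
    by (simp add: case_prod_unfold mult.assoc)
qed

section \<open>Theta series and the cubic identity\<close>

text \<open>With \<open>L = \<pi> i \<tau>\<close> and \<open>M = 2 \<pi> i z\<close>, \<open>theta_sum L M\<close> is \<open>\<theta>\<^sub>3(z|\<tau>)\<close>, \<open>theta_dsum L M\<close>
  is \<open>(2 \<pi> i)\<^sup>-\<^sup>1 \<partial>\<^sub>z \<theta>\<^sub>3(z|\<tau>)\<close> and \<open>hex_sum L\<close> is the theta series \<open>a(\<tau>)\<close> of the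
  hexagonal lattice.\<close>

definition theta_term :: "complex \<Rightarrow> complex \<Rightarrow> int \<Rightarrow> complex" where
  "theta_term L M n = exp (of_int n ^ 2 * L + of_int n * M)"

definition theta_sum :: "complex \<Rightarrow> complex \<Rightarrow> complex" where
  "theta_sum L M = (\<Sum>\<^sub>\<infinity>n. theta_term L M n)"

definition theta_dsum :: "complex \<Rightarrow> complex \<Rightarrow> complex" where
  "theta_dsum L M = (\<Sum>\<^sub>\<infinity>n. of_int n * theta_term L M n)"

definition hex_sum :: "complex \<Rightarrow> complex" where
  "hex_sum L = (\<Sum>\<^sub>\<infinity>(k, l). exp (of_int (k^2 + k*l + l^2) * (2 * L)))"

lemma theta_term_eq_powi: "theta_term L M n = exp L powi (n^2) * exp M powi n"
  by (simp add: theta_term_def exp_power_int exp_add mult.commute)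

lemma theta_term_weighted_abs_summable:
  assumes L: "Re L < 0" and w: "\<And>n. norm (w n) \<le> 1 + of_int \<bar>n\<bar>"
  shows "(\<lambda>n. norm (w n * theta_term L M n)) summable_on UNIV"
  using gaussian_series_abs_summable[of "exp L" "exp M" w] L w
  by (simp add: theta_term_eq_powi mult.assoc)

lemma theta_term_abs_summable:
  "Re L < 0 \<Longrightarrow> (\<lambda>n. norm (theta_term L M n)) summable_on UNIV"
  using theta_term_weighted_abs_summable[of L "\<lambda>_. 1"] by simp

lemma theta_dterm_abs_summable:
  "Re L < 0 \<Longrightarrow> (\<lambda>n. norm (of_int n * theta_term L M n)) summable_on UNIV"
  using theta_term_weighted_abs_summable[of L of_int] by simp

lemma hex_sum_abs_summable:
  assumes L: "Re L < 0"
  shows "(\<lambda>p. norm (case p of (k, l) \<Rightarrow> exp (of_int (k^2 + k*l + l^2) * (2 * L))))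
           summable_on UNIV"
proof (rule summable_on_comparison_test)
  show "(\<lambda>p. norm (case p of (k, l) \<Rightarrow> theta_term L 0 k * theta_term L 0 l)) summable_on UNIV"
    using norm_summable_on_times[OF theta_term_abs_summable theta_term_abs_summable] L by simp
  fix p :: "int \<times> int"
  obtain k l where p: "p = (k, l)"
    by (cases p)
  have "real_of_int (k^2) + of_int (l^2) \<le> 2 * of_int (k^2 + k*l + l^2)"
    using zero_le_power2[of "real_of_int k + of_int l"] by (simp add: power2_eq_square algebra_simps)
  then have "exp (2 * of_int (k^2 + k*l + l^2) * Re L) \<le> exp ((of_int (k^2) + of_int (l^2)) * Re L)"
    using L by (intro exp_mono mult_right_mono_neg) auto
  then show "norm (case p of (k, l) \<Rightarrow> exp (of_int (k^2 + k*l + l^2) * (2 * L)))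
      \<le> norm (case p of (k, l) \<Rightarrow> theta_term L 0 k * theta_term L 0 l)"
    by (simp add: p theta_term_def norm_mult exp_add[symmetric] algebra_simps)
qed auto

text \<open>The bijection \<open>{0,1,2} \<times> \<int>\<^sup>3 \<rightarrow> \<int>\<^sup>3\<close> behind the cubic identity: the quadratic form
  \<open>N\<^sup>2 + 2 (k\<^sup>2 + k l + l\<^sup>2)\<close> becomes \<open>j\<^sup>2 + (3 n\<^sub>1\<^sup>2 + 2 j n\<^sub>1) + (3 n\<^sub>2\<^sup>2 + 2 j n\<^sub>2) + (3 n\<^sub>3\<^sup>2 + 2 j n\<^sub>3)\<close>.\<close>

definition cube_merge :: "int \<times> int \<times> int \<times> int \<Rightarrow> int \<times> int \<times> int" where
  "cube_merge = (\<lambda>(j, n1, n2, n3). (n1 + n2 + n3 + j, n1 - n3, n2 - n1))"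

definition cube_split :: "int \<times> int \<times> int \<Rightarrow> int \<times> int \<times> int \<times> int" where
  "cube_split = (\<lambda>(N, k, l).
     ((N + k - l) mod 3, (N + k - l) div 3, (N + k + 2*l) div 3, (N - 2*k - l) div 3))"

lemma cube_split_merge: "j \<in> {0, 1, 2} \<Longrightarrow> cube_split (cube_merge (j, n1, n2, n3)) = (j, n1, n2, n3)"
  unfolding cube_split_def cube_merge_def by auto

lemma cube_merge_split: "cube_merge (cube_split b) = b"
proof -
  obtain N k l where b: "b = (N, k, l)"
    by (cases b)
  define m where "m = N + k - l"
  have sums: "N + k + 2*l = m + l*3" "N - 2*k - l = m + (-k)*3"
    by (simp_all add: m_def)
  have "(m + l*3) div 3 = m div 3 + l" "(m + (-k)*3) div 3 = m div 3 - k" "3 * (m div 3) + m mod 3 = m"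
    by simp_all
  then show ?thesis
    unfolding b cube_split_def cube_merge_def by (simp add: sums flip: m_def) (simp add: m_def)
qed

lemma cube_split_range: "fst (cube_split b) \<in> {0, 1, 2}"
proof -
  obtain N k l where b: "b = (N, k, l)"
    by (cases b)
  have "(N + k - l) mod 3 \<in> {0..<3}"
    by simp
  then show ?thesis
    by (auto simp: b cube_split_def)
qed

lemma theta_term_cube_merge:
  "theta_term L M (n1 + n2 + n3 + j) * exp (of_int ((n1 - n3)^2 + (n1 - n3) * (n2 - n1) + (n2 - n1)^2) * (2 * L))
   = theta_term L M j * (theta_term (3 * L) (M + 2 * of_int j * L) n1
       * theta_term (3 * L) (M + 2 * of_int j * L) n2 * theta_term (3 * L) (M + 2 * of_int j * L) n3)"
  unfolding theta_term_def exp_add[symmetric]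
  by (rule arg_cong[where f = exp]) (simp add: algebra_simps power2_eq_square)

lemma has_sum_Sigma_012:
  fixes f :: "int \<times> 'b \<Rightarrow> 'c::{comm_monoid_add, uniform_topological_group_add, t2_space}"
  assumes "(f has_sum S) ({0, 1, 2} \<times> UNIV)"
    and "\<And>j. j \<in> {0, 1, 2} \<Longrightarrow> ((\<lambda>n. f (j, n)) has_sum b j) UNIV"
  shows "S = b 0 + b 1 + b 2"
proof -
  have "(b has_sum S) {0, 1, 2}"
    by (rule has_sum_Sigma'[OF assms])
  then have "S = infsum b {0, 1, 2}"
    by (rule infsumI[symmetric])
  then show ?thesis
    by (simp add: add.assoc)
qed

lemma weighted_theta_times_hex_sum:
  assumes L: "Re L < 0" and w: "\<And>N. norm (w N) \<le> 1 + of_int \<bar>N\<bar>"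
    and fibre: "\<And>j. j \<in> {0, 1, 2} \<Longrightarrow>
      ((\<lambda>(n1, n2, n3). w (n1 + n2 + n3 + j) * (theta_term (3 * L) (M + 2 * of_int j * L) n1
         * theta_term (3 * L) (M + 2 * of_int j * L) n2 * theta_term (3 * L) (M + 2 * of_int j * L) n3))
       has_sum b j) UNIV"
  shows "(\<Sum>\<^sub>\<infinity>N. w N * theta_term L M N) * hex_sum L
           = b 0 + exp (L + M) * b 1 + exp (4 * L + 2 * M) * b 2"
proof -
  let ?f = "\<lambda>N. w N * theta_term L M N"
  let ?g = "\<lambda>(k, l). exp (of_int (k^2 + k*l + l^2) * (2 * L))"
  let ?h = "\<lambda>(j, n1, n2, n3). theta_term L M j * (w (n1 + n2 + n3 + j)
      * (theta_term (3 * L) (M + 2 * of_int j * L) n1 * theta_term (3 * L) (M + 2 * of_int j * L) n2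
         * theta_term (3 * L) (M + 2 * of_int j * L) n3))"
  have prod: "((\<lambda>(N, kl). ?f N * ?g kl) has_sum (infsum ?f UNIV * hex_sum L)) UNIV"
    using has_sum_times[OF theta_term_weighted_abs_summable[OF L w] hex_sum_abs_summable[OF L]]
    by (simp add: hex_sum_def)
  have "(?h has_sum (infsum ?f UNIV * hex_sum L)) ({0, 1, 2} \<times> UNIV)"
  proof (rule iffD2[OF has_sum_reindex_bij_witness[where i = cube_split and j = cube_merge]])
    fix a :: "int \<times> int \<times> int \<times> int"
    assume "a \<in> {0, 1, 2} \<times> UNIV"
    then obtain j n1 n2 n3 where a: "a = (j, n1, n2, n3)" and j: "j \<in> {0, 1, 2}"
      by auto
    show "cube_split (cube_merge a) = a"
      using cube_split_merge[OF j] a by simp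
    show "(\<lambda>(N, kl). ?f N * ?g kl) (cube_merge a) = ?h a"
      unfolding a cube_merge_def prod.case mult.assoc theta_term_cube_merge by (simp add: mult_ac)
  next
    show "cube_merge (cube_split b) = b" "cube_split b \<in> {0, 1, 2} \<times> UNIV" for b
      using cube_merge_split[of b] cube_split_range[of b] by (auto simp: mem_Times_iff)
  qed (use prod in simp_all)
  then have "infsum ?f UNIV * hex_sum L
      = theta_term L M 0 * b 0 + theta_term L M 1 * b 1 + theta_term L M 2 * b 2"
  proof (rule has_sum_Sigma_012[where b = "\<lambda>j. theta_term L M j * b j"])
    show "((\<lambda>n. ?h (j, n)) has_sum theta_term L M j * b j) UNIV" if "j \<in> {0, 1, 2}" for j
      using has_sum_cmult_right[OF fibre[OF that], of "theta_term L M j"]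
      by (simp add: case_prod_unfold)
  qed
  then show ?thesis
    by (simp add: theta_term_def)
qed

lemma theta_cube_has_sum:
  assumes "Re K < 0"
  shows "((\<lambda>(n1, n2, n3). theta_term K M n1 * theta_term K M n2 * theta_term K M n3)
           has_sum theta_sum K M ^ 3) UNIV"
  using has_sum_times3[OF theta_term_abs_summable theta_term_abs_summable theta_term_abs_summable] assms
  by (simp add: theta_sum_def power3_eq_cube)

lemma theta_cube_weighted_has_sum:
  assumes K: "Re K < 0"
  shows "((\<lambda>(n1, n2, n3). of_int (n1 + n2 + n3 + j)
             * (theta_term K M n1 * theta_term K M n2 * theta_term K M n3))
           has_sum (of_int j * theta_sum K M ^ 3 + 3 * theta_dsum K M * theta_sum K M ^ 2)) UNIV"
proof -
  define e where "e = theta_term K M"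
  define d where "d = (\<lambda>n. of_int n * e n)"
  define T where "T = theta_sum K M"
  define D where "D = theta_dsum K M"
  have se: "(\<lambda>n. norm (e n)) summable_on UNIV" and sd: "(\<lambda>n. norm (d n)) summable_on UNIV"
    using theta_term_abs_summable[OF K] theta_dterm_abs_summable[OF K] by (simp_all add: e_def d_def)
  have T: "infsum e UNIV = T" and D: "infsum d UNIV = D"
    by (simp_all add: e_def d_def T_def D_def theta_sum_def theta_dsum_def)
  let ?f0 = "\<lambda>(n1, n2, n3). e n1 * e n2 * e n3"
  let ?f1 = "\<lambda>(n1, n2, n3). d n1 * e n2 * e n3"
  let ?f2 = "\<lambda>(n1, n2, n3). e n1 * d n2 * e n3"
  let ?f3 = "\<lambda>(n1, n2, n3). e n1 * e n2 * d n3"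
  have "(?f0 has_sum T * T * T) UNIV" "(?f1 has_sum D * T * T) UNIV"
       "(?f2 has_sum T * D * T) UNIV" "(?f3 has_sum T * T * D) UNIV"
    using has_sum_times3[OF se se se] has_sum_times3[OF sd se se]
      has_sum_times3[OF se sd se] has_sum_times3[OF se se sd]
    by (simp_all add: T D)
  then have "((\<lambda>p. of_int j * ?f0 p + ?f1 p + ?f2 p + ?f3 p)
      has_sum (of_int j * (T * T * T) + D * T * T + T * D * T + T * T * D)) UNIV"
    by (intro has_sum_add has_sum_cmult_right)
  moreover have "of_int j * (T * T * T) + D * T * T + T * D * T + T * T * D
      = of_int j * T ^ 3 + 3 * D * T ^ 2"
    by (simp add: algebra_simps power2_eq_square power3_eq_cube)
  ultimately have "((\<lambda>p. of_int j * ?f0 p + ?f1 p + ?f2 p + ?f3 p)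
      has_sum (of_int j * T ^ 3 + 3 * D * T ^ 2)) UNIV"
    by simp
  then show ?thesis
    unfolding T_def D_def
    by (rule iffD1[OF has_sum_cong, rotated]) (auto simp: d_def e_def algebra_simps)
qed

theorem theta_cubic_identity:
  assumes L: "Re L < 0"
  shows "theta_sum (3 * L) M ^ 3 + exp (L + M) * theta_sum (3 * L) (M + 2 * L) ^ 3
           + exp (4 * L + 2 * M) * theta_sum (3 * L) (M + 4 * L) ^ 3
         = theta_sum L M * hex_sum L"
proof -
  have "(\<Sum>\<^sub>\<infinity>N. 1 * theta_term L M N) * hex_sum L
      = theta_sum (3 * L) (M + 2 * of_int 0 * L) ^ 3 + exp (L + M) * theta_sum (3 * L) (M + 2 * of_int 1 * L) ^ 3
        + exp (4 * L + 2 * M) * theta_sum (3 * L) (M + 2 * of_int 2 * L) ^ 3"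
    by (rule weighted_theta_times_hex_sum[where b = "\<lambda>j. theta_sum (3 * L) (M + 2 * of_int j * L) ^ 3"])
      (use L in \<open>auto intro: theta_cube_has_sum\<close>)
  then show ?thesis
    by (simp add: theta_sum_def mult.commute)
qed

theorem theta_dsum_cubic_identity:
  assumes L: "Re L < 0"
  shows "3 * theta_dsum (3 * L) M * theta_sum (3 * L) M ^ 2
         + exp (L + M) * (theta_sum (3 * L) (M + 2 * L) ^ 3
             + 3 * theta_dsum (3 * L) (M + 2 * L) * theta_sum (3 * L) (M + 2 * L) ^ 2)
         + exp (4 * L + 2 * M) * (2 * theta_sum (3 * L) (M + 4 * L) ^ 3
             + 3 * theta_dsum (3 * L) (M + 4 * L) * theta_sum (3 * L) (M + 4 * L) ^ 2)
         = theta_dsum L M * hex_sum L"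
proof -
  define b where "b j = of_int j * theta_sum (3 * L) (M + 2 * of_int j * L) ^ 3
      + 3 * theta_dsum (3 * L) (M + 2 * of_int j * L) * theta_sum (3 * L) (M + 2 * of_int j * L) ^ 2"
    for j :: int
  have "(\<Sum>\<^sub>\<infinity>N. of_int N * theta_term L M N) * hex_sum L
      = b 0 + exp (L + M) * b 1 + exp (4 * L + 2 * M) * b 2"
  proof (rule weighted_theta_times_hex_sum[OF L])
    show "norm (of_int N :: complex) \<le> 1 + of_int \<bar>N\<bar>" for N
      by simp
    show "((\<lambda>(n1, n2, n3). of_int (n1 + n2 + n3 + j) * (theta_term (3 * L) (M + 2 * of_int j * L) n1
        * theta_term (3 * L) (M + 2 * of_int j * L) n2 * theta_term (3 * L) (M + 2 * of_int j * L) n3))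
        has_sum b j) UNIV" for j
      unfolding b_def by (rule theta_cube_weighted_has_sum) (use L in simp)
  qed
  then show ?thesis
    by (simp add: b_def theta_dsum_def mult.commute)
qed

section \<open>Functional equations and a special value\<close>

lemma theta_term_add_2pi: "theta_term K (M + 2 * of_real pi * \<i>) = theta_term K M"
proof
  fix n :: int
  have "exp (of_int n * (2 * of_real pi * \<i>)) = 1"
    using exp_power_int[of "2 * of_real pi * \<i>" n] by simp
  then show "theta_term K (M + 2 * of_real pi * \<i>) n = theta_term K M n"
    by (simp add: theta_term_def distrib_left exp_add)
qed

lemma theta_sum_add_2pi: "theta_sum K (M + 2 * of_real pi * \<i>) = theta_sum K M"
  by (simp add: theta_sum_def theta_term_add_2pi)

lemma theta_dsum_add_2pi: "theta_dsum K (M + 2 * of_real pi * \<i>) = theta_dsum K M"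
  by (simp add: theta_dsum_def theta_term_add_2pi)

lemma theta_term_reflect: "theta_term K (2 * K - M) (- n - 1) = exp (M - K) * theta_term K M n"
  unfolding theta_term_def exp_add[symmetric]
  by (rule arg_cong[where f = exp]) (simp add: algebra_simps power2_eq_square)

lemma bij_betw_reflect_int: "bij_betw (\<lambda>n::int. - n - 1) UNIV UNIV"
  by (rule bij_betwI[where g = "\<lambda>n. - n - 1"]) auto

lemma theta_sum_reflect: "theta_sum K (2 * K - M) = exp (M - K) * theta_sum K M"
proof -
  have "theta_sum K (2 * K - M) = (\<Sum>\<^sub>\<infinity>n. theta_term K (2 * K - M) (- n - 1))"
    unfolding theta_sum_def by (rule infsum_reindex_bij_betw[OF bij_betw_reflect_int, symmetric])
  also have "\<dots> = (\<Sum>\<^sub>\<infinity>n. exp (M - K) * theta_term K M n)"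
    by (simp only: theta_term_reflect)
  also have "\<dots> = exp (M - K) * theta_sum K M"
    unfolding theta_sum_def by (rule infsum_cmult_right')
  finally show ?thesis .
qed

lemma theta_dsum_reflect:
  assumes K: "Re K < 0"
  shows "theta_dsum K (2 * K - M) = - exp (M - K) * (theta_dsum K M + theta_sum K M)"
proof -
  have "theta_dsum K (2 * K - M) = (\<Sum>\<^sub>\<infinity>n. of_int (- n - 1) * theta_term K (2 * K - M) (- n - 1))"
    unfolding theta_dsum_def by (rule infsum_reindex_bij_betw[OF bij_betw_reflect_int, symmetric])
  also have "\<dots> = (\<Sum>\<^sub>\<infinity>n. - exp (M - K) * (of_int n * theta_term K M n + theta_term K M n))"
    by (rule infsum_cong) (simp only: theta_term_reflect, simp add: algebra_simps)
  also have "\<dots> = - exp (M - K) * (\<Sum>\<^sub>\<infinity>n. of_int n * theta_term K M n + theta_term K M n)"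
    by (rule infsum_cmult_right')
  also have "(\<Sum>\<^sub>\<infinity>n. of_int n * theta_term K M n + theta_term K M n) = theta_dsum K M + theta_sum K M"
    unfolding theta_dsum_def theta_sum_def
    by (rule infsum_add[OF abs_summable_summable abs_summable_summable])
      (use theta_dterm_abs_summable[OF K] theta_term_abs_summable[OF K] in auto)
  finally show ?thesis .
qed

lemma theta_sum_half_period_zero: "theta_sum K (K + of_real pi * \<i>) = 0"
proof -
  have "theta_sum K (K + of_real pi * \<i>) = theta_sum K ((K - of_real pi * \<i>) + 2 * of_real pi * \<i>)"
    by (simp add: algebra_simps)
  also have "\<dots> = theta_sum K (2 * K - (K + of_real pi * \<i>))"
    by (simp only: theta_sum_add_2pi) (simp add: algebra_simps)
  also have "\<dots> = - theta_sum K (K + of_real pi * \<i>)"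
    unfolding theta_sum_reflect by simp
  finally show ?thesis
    by simp
qed

lemma theta_half_period_identity:
  assumes L: "Re L < 0"
  defines "T \<equiv> theta_sum (3 * L) (L + of_real pi * \<i>)"
    and "D \<equiv> theta_dsum (3 * L) (L + of_real pi * \<i>)"
  shows "T^2 * (T + 6 * D) = theta_dsum L (L + of_real pi * \<i>) * hex_sum L"
proof -
  define M where "M = L + of_real pi * \<i>"
  have K: "Re (3 * L) < 0"
    using L by simp
  have TM: "T = theta_sum (3 * L) M" and DM: "D = theta_dsum (3 * L) M"
    by (simp_all add: T_def D_def M_def)
  have reflect: "M + 4 * L = 2 * (3 * L) - M + 2 * of_real pi * \<i>"
    by (simp add: M_def algebra_simps)
  have e: "exp (M - 3 * L) = - exp (-2 * L)"
    by (simp add: M_def exp_diff exp_add exp_minus field_simps flip: exp_add)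
  have T1: "theta_sum (3 * L) (M + 2 * L) = 0"
    using theta_sum_half_period_zero[of "3 * L"] by (simp add: M_def algebra_simps)
  have T2: "theta_sum (3 * L) (M + 4 * L) = - exp (-2 * L) * T"
    unfolding reflect theta_sum_add_2pi theta_sum_reflect e TM ..
  have D2: "theta_dsum (3 * L) (M + 4 * L) = exp (-2 * L) * (D + T)"
    unfolding reflect theta_dsum_add_2pi theta_dsum_reflect[OF K] e TM DM by simp
  have e6: "exp (4 * L + 2 * M) = exp (6 * L)"
    using exp_add[of "6 * L" "2 * of_real pi * \<i>"] by (simp add: M_def algebra_simps)
  have e3: "exp (6 * L) * exp (-2 * L) ^ 3 = 1"
    by (simp add: exp_add[symmetric] flip: exp_of_nat_mult)
  have "theta_dsum L M * hex_sum L
      = 3 * D * T^2 + exp (6 * L) * (2 * (- exp (-2 * L) * T) ^ 3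
          + 3 * (exp (-2 * L) * (D + T)) * (- exp (-2 * L) * T) ^ 2)"
    using theta_dsum_cubic_identity[OF L, of M] by (simp add: T1 T2 D2 e6 TM DM)
  also have "\<dots> = 3 * D * T^2 + (exp (6 * L) * exp (-2 * L) ^ 3) * (3 * (D + T) * T^2 - 2 * T^3)"
    by (simp add: algebra_simps power2_eq_square power3_eq_cube)
  also have "\<dots> = T^2 * (T + 6 * D)"
    unfolding e3 by (simp add: algebra_simps power2_eq_square power3_eq_cube)
  finally show ?thesis
    by (simp add: M_def)
qed

section \<open>The Jacobi triple product, finite form\<close>

text \<open>\<open>qpoch p m\<close> is the \<open>q\<close>-Pochhammer symbol \<open>(p; p)\<^sub>m\<close>; its reciprocal is extended by \<open>0\<close> to
  negative indices, so that the Gaussian binomials hidden in \<open>jtp_coeff\<close> vanish outside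
  \<open>-N \<le> j \<le> N\<close>. Then \<open>jtp_coeff x N j\<close> is \<open>x^(j\<^sup>2)\<close> times the Gaussian binomial coefficient
  \<open>[2N, N + j]\<close> in the base \<open>x\<^sup>2\<close>.\<close>

definition qpoch :: "complex \<Rightarrow> nat \<Rightarrow> complex" where
  "qpoch p m = (\<Prod>k = 1..m. 1 - p ^ k)"

definition qpoch_inv :: "complex \<Rightarrow> int \<Rightarrow> complex" where
  "qpoch_inv p m = (if m < 0 then 0 else 1 / qpoch p (nat m))"

definition jtp_coeff :: "complex \<Rightarrow> nat \<Rightarrow> int \<Rightarrow> complex" where
  "jtp_coeff x N j =
     x powi (j^2) * qpoch (x^2) (2 * N) * qpoch_inv (x^2) (int N + j) * qpoch_inv (x^2) (int N - j)"

definition jtp_prod :: "complex \<Rightarrow> complex \<Rightarrow> nat \<Rightarrow> complex" where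
  "jtp_prod x y N = (\<Prod>k = 1..N. (1 + x ^ (2 * k - 1) * y) * (1 + x ^ (2 * k - 1) / y))"

lemma jtp_prod_Suc:
  "jtp_prod x y (Suc N) = jtp_prod x y N * ((1 + x ^ (2 * N + 1) * y) * (1 + x ^ (2 * N + 1) / y))"
  by (simp add: jtp_prod_def)

lemma qpoch_0 [simp]: "qpoch p 0 = 1"
  by (simp add: qpoch_def)

lemma qpoch_Suc: "qpoch p (Suc m) = qpoch p m * (1 - p ^ Suc m)"
  by (simp add: qpoch_def)

lemma power_neq_one_if_norm_less:
  fixes p :: "'a::real_normed_div_algebra"
  assumes "norm p < 1" and "0 < k"
  shows "p ^ k \<noteq> 1"
proof
  assume "p ^ k = 1"
  then have "norm p ^ k = 1"
    by (metis norm_one norm_power)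
  moreover have "norm p ^ k \<le> norm p ^ 1"
    using assms by (intro power_decreasing) auto
  ultimately show False
    using assms by simp
qed

lemma qpoch_nonzero: "norm p < 1 \<Longrightarrow> qpoch p m \<noteq> 0"
  by (auto simp: qpoch_def prod_zero_iff power_neq_one_if_norm_less)

lemma qpoch_inv_neg [simp]: "m < 0 \<Longrightarrow> qpoch_inv p m = 0"
  by (simp add: qpoch_inv_def)

lemma qpoch_inv_pred:
  assumes "norm p < 1"
  shows "qpoch_inv p (int m - 1) = (1 - p ^ m) * qpoch_inv p (int m)"
proof (cases m)
  case (Suc k)
  have "qpoch p k \<noteq> 0"
    using assms by (rule qpoch_nonzero)
  moreover have "1 - p ^ Suc k \<noteq> 0"
    using power_neq_one_if_norm_less[OF assms, of "Suc k"] by simp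
  moreover have "qpoch_inv p (int m - 1) = 1 / qpoch p k"
    by (simp add: Suc qpoch_inv_def)
  moreover have "qpoch_inv p (int m) = 1 / (qpoch p k * (1 - p ^ Suc k))"
    by (simp add: qpoch_inv_def Suc qpoch_Suc del: of_nat_Suc)
  ultimately show ?thesis
    by (simp add: Suc)
qed (simp add: qpoch_inv_def)

lemma qpoch_inv_pred2:
  assumes "norm p < 1"
  shows "qpoch_inv p (int m - 2) = (1 - p ^ (m - 1)) * (1 - p ^ m) * qpoch_inv p (int m)"
proof (cases m)
  case (Suc k)
  have "qpoch_inv p (int m - 2) = qpoch_inv p (int k - 1)"
    by (simp add: Suc)
  also have "\<dots> = (1 - p ^ k) * ((1 - p ^ m) * qpoch_inv p (int m))"
    using qpoch_inv_pred[OF assms, of k] qpoch_inv_pred[OF assms, of m] by (simp add: Suc)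
  finally show ?thesis
    by (simp add: Suc)
qed simp

lemma jtp_coeff_uminus: "jtp_coeff x N (- j) = jtp_coeff x N j"
  by (simp add: jtp_coeff_def mult_ac)

lemma jtp_coeff_eq_0: "int N < \<bar>j\<bar> \<Longrightarrow> jtp_coeff x N j = 0"
  by (cases "j > 0") (auto simp: jtp_coeff_def)

lemma gaussian_binomial_recurrence_identity:
  fixes p :: "'a::comm_ring_1"
  assumes ab: "a + b = 2 * N + 2"
  shows "(1 - p ^ (2 * N + 1)) * (1 - p ^ (2 * N + 2))
         = (1 + p ^ (2 * N + 1)) * (1 - p ^ a) * (1 - p ^ b)
           + p ^ b * ((1 - p ^ (a - 1)) * (1 - p ^ a)) + p ^ a * ((1 - p ^ (b - 1)) * (1 - p ^ b))"
proof (cases "a = 0 \<or> b = 0")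
  case True
  with ab show ?thesis
    by auto
next
  case False
  then obtain a' b' where a: "a = Suc a'" and b: "b = Suc b'"
    by (meson not0_implies_Suc)
  define A B where "A = p ^ a'" and "B = p ^ b'"
  from ab a b have "p ^ (2 * N) = A * B"
    by (simp add: A_def B_def flip: power_add)
  then have powers: "p ^ (2 * N + 1) = p * (A * B)" "p ^ (2 * N + 2) = p * p * (A * B)"
    "p ^ a = p * A" "p ^ b = p * B" "p ^ (a - 1) = A" "p ^ (b - 1) = B"
    by (simp_all add: a b A_def B_def)
  show ?thesis
    unfolding powers by (simp add: algebra_simps)
qed

lemma powi_square_pred:
  fixes x :: complex
  assumes x0: "x \<noteq> 0" and b: "int b = int N + 1 - j"
  shows "x ^ (2 * N + 1) * x powi ((j - 1)^2) = x powi (j^2) * (x^2) ^ b"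
proof -
  have "x ^ (2 * N + 1) * x powi ((j - 1)^2) = x powi (int (2 * N + 1) + (j - 1)^2)"
    unfolding power_int_of_nat[symmetric] by (rule power_int_add[symmetric]) (simp add: x0)
  also have "int (2 * N + 1) + (j - 1)^2 = j^2 + 2 * int b"
    by (simp add: b power2_eq_square algebra_simps)
  also have "x powi (j^2 + 2 * int b) = x powi (j^2) * (x powi 2) powi int b"
    using x0 by (simp add: power_int_add power_int_mult)
  finally show ?thesis
    by simp
qed

lemma jtp_coeff_expansions:
  assumes x1: "norm x < 1" and x0: "x \<noteq> 0"
    and a: "int a = int N + 1 + j" and b: "int b = int N + 1 - j"
  defines "C \<equiv> x powi (j^2) * qpoch (x^2) (2 * N) * qpoch_inv (x^2) (int a) * qpoch_inv (x^2) (int b)"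
  shows "jtp_coeff x (Suc N) j = C * ((1 - (x^2) ^ (2 * N + 1)) * (1 - (x^2) ^ (2 * N + 2)))"
    and "jtp_coeff x N j = C * ((1 - (x^2) ^ a) * (1 - (x^2) ^ b))"
    and "x ^ (2 * N + 1) * jtp_coeff x N (j - 1)
         = C * ((x^2) ^ b * ((1 - (x^2) ^ (a - 1)) * (1 - (x^2) ^ a)))"
proof -
  define p where "p = x^2"
  have p: "norm p < 1"
    using x1 by (simp add: p_def norm_power power_less_one_iff)
  have "int (Suc N) + j = int a" and "int (Suc N) - j = int b"
    using a b by simp_all
  moreover have "qpoch p (2 * Suc N) = qpoch p (2 * N) * ((1 - p ^ (2 * N + 1)) * (1 - p ^ (2 * N + 2)))"
    by (simp add: qpoch_Suc)
  ultimately show "jtp_coeff x (Suc N) j = C * ((1 - (x^2) ^ (2 * N + 1)) * (1 - (x^2) ^ (2 * N + 2)))"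
    unfolding jtp_coeff_def C_def p_def[symmetric] by (simp only:) (simp add: mult_ac)
  have "int N + j = int a - 1" and "int N - j = int b - 1"
    using a b by simp_all
  then show "jtp_coeff x N j = C * ((1 - (x^2) ^ a) * (1 - (x^2) ^ b))"
    unfolding jtp_coeff_def C_def p_def[symmetric] by (simp only: qpoch_inv_pred[OF p]) (simp add: mult_ac)
  have "int N + (j - 1) = int a - 2" and "int N - (j - 1) = int b"
    using a b by simp_all
  then have "qpoch_inv p (int N + (j - 1)) = (1 - p ^ (a - 1)) * (1 - p ^ a) * qpoch_inv p (int a)"
    and "qpoch_inv p (int N - (j - 1)) = qpoch_inv p (int b)"
    by (simp_all only: qpoch_inv_pred2[OF p])
  moreover have "x ^ (2 * N + 1) * jtp_coeff x N (j - 1)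
      = (x ^ (2 * N + 1) * x powi ((j - 1)^2)) * qpoch p (2 * N)
        * qpoch_inv p (int N + (j - 1)) * qpoch_inv p (int N - (j - 1))"
    by (simp add: jtp_coeff_def p_def mult_ac)
  ultimately show "x ^ (2 * N + 1) * jtp_coeff x N (j - 1)
      = C * ((x^2) ^ b * ((1 - (x^2) ^ (a - 1)) * (1 - (x^2) ^ a)))"
    unfolding powi_square_pred[OF x0 b] by (simp add: C_def p_def mult_ac)
qed

lemma jtp_coeff_Suc:
  assumes x1: "norm x < 1" and x0: "x \<noteq> 0"
  shows "jtp_coeff x (Suc N) j
         = (1 + x ^ (4 * N + 2)) * jtp_coeff x N j
           + x ^ (2 * N + 1) * (jtp_coeff x N (j - 1) + jtp_coeff x N (j + 1))"
proof (cases "\<bar>j\<bar> \<le> int N + 1")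
  case False
  have "jtp_coeff x N i = 0" if "\<bar>i - j\<bar> \<le> 1" for i
    by (intro jtp_coeff_eq_0) (use False that in arith)
  moreover have "jtp_coeff x (Suc N) j = 0"
    by (intro jtp_coeff_eq_0) (use False in simp)
  ultimately show ?thesis
    by simp
next
  case True
  define a b where "a = nat (int N + 1 + j)" and "b = nat (int N + 1 - j)"
  have a: "int a = int N + 1 + j" and b: "int b = int N + 1 - j"
    using True by (simp_all add: a_def b_def)
  then have ab: "a + b = 2 * N + 2"
    by linarith
  define p where "p = x^2"
  define C where "C = x powi (j^2) * qpoch p (2 * N) * qpoch_inv p (int a) * qpoch_inv p (int b)"
  note expansions = jtp_coeff_expansions[OF x1 x0 a b, folded p_def, folded C_def]
  \<comment> \<open>the coefficient at \<open>j + 1\<close> is the one at \<open>-j - 1\<close>, where the roles of \<open>a\<close> and \<open>b\<close> swap\<close>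
  have succ: "x ^ (2 * N + 1) * jtp_coeff x N (j + 1) = C * (p ^ a * ((1 - p ^ (b - 1)) * (1 - p ^ b)))"
  proof -
    have "int b = int N + 1 + - j" and "int a = int N + 1 - - j"
      using a b by simp_all
    from jtp_coeff_expansions(3)[OF x1 x0 this] show ?thesis
      using jtp_coeff_uminus[of x N "j + 1"] by (simp add: C_def p_def mult_ac)
  qed
  have "4 * N + 2 = 2 * (2 * N + 1)"
    by simp
  then have x4: "x ^ (4 * N + 2) = p ^ (2 * N + 1)"
    by (simp only: p_def power_mult)
  have ring: "c * ((1 + q) * u * v + r + s) = (1 + q) * (c * (u * v)) + (c * r + c * s)"
    for c q u v r s :: complex
    by (simp add: algebra_simps)
  show ?thesis
    unfolding distrib_left[of "x ^ (2 * N + 1)"] expansions succ x4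
      gaussian_binomial_recurrence_identity[OF ab]
    by (rule ring)
qed

lemma sum_symmetric_interval_shift:
  fixes g :: "int \<Rightarrow> 'a::comm_monoid_add"
  assumes g: "\<And>i. R \<le> \<bar>i\<bar> \<Longrightarrow> g i = 0" and c: "\<bar>c\<bar> \<le> 1"
  shows "(\<Sum>j = -R..R. g (j + c)) = (\<Sum>j = -R..R. g j)"
proof -
  have "(\<Sum>j = -R..R. g (j + c)) = (\<Sum>i = -R + c..R + c. g i)"
    by (rule sum.reindex_bij_witness[where i = "\<lambda>i. i - c" and j = "\<lambda>j. j + c"]) auto
  also have "\<dots> = (\<Sum>i = 1 - R..R - 1. g i)"
    by (rule sum.mono_neutral_right) (use g c in auto)
  also have "\<dots> = (\<Sum>j = -R..R. g j)"
    by (rule sum.mono_neutral_left) (use g in auto)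
  finally show ?thesis .
qed

lemma jtp_coeff_sum_shifts:
  assumes y0: "y \<noteq> 0" and R: "int N < R"
  shows "(\<Sum>j = -R..R. jtp_coeff x N (j - 1) * y powi j) = y * (\<Sum>j = -R..R. jtp_coeff x N j * y powi j)"
    and "(\<Sum>j = -R..R. jtp_coeff x N (j + 1) * y powi j) = (\<Sum>j = -R..R. jtp_coeff x N j * y powi j) / y"
proof -
  have vanish: "jtp_coeff x N i = 0" if "R \<le> \<bar>i\<bar>" for i
    using R that by (intro jtp_coeff_eq_0) simp
  have "(\<Sum>j = -R..R. jtp_coeff x N (j + -1) * y powi (j + -1 + 1))
      = (\<Sum>j = -R..R. jtp_coeff x N j * y powi (j + 1))"
    by (rule sum_symmetric_interval_shift) (simp_all add: vanish)
  then show "(\<Sum>j = -R..R. jtp_coeff x N (j - 1) * y powi j) = y * (\<Sum>j = -R..R. jtp_coeff x N j * y powi j)"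
    using y0 by (simp add: sum_distrib_left power_int_add mult_ac)
  have "(\<Sum>j = -R..R. jtp_coeff x N (j + 1) * y powi (j + 1 - 1))
      = (\<Sum>j = -R..R. jtp_coeff x N j * y powi (j - 1))"
    by (rule sum_symmetric_interval_shift) (simp_all add: vanish)
  then show "(\<Sum>j = -R..R. jtp_coeff x N (j + 1) * y powi j) = (\<Sum>j = -R..R. jtp_coeff x N j * y powi j) / y"
    using y0 by (simp add: sum_divide_distrib power_int_diff)
qed

theorem jtp_prod_eq_sum:
  assumes x1: "norm x < 1" and x0: "x \<noteq> 0" and y0: "y \<noteq> 0"
  shows "int N \<le> R \<Longrightarrow> jtp_prod x y N = (\<Sum>j = -R..R. jtp_coeff x N j * y powi j)"
proof (induction N arbitrary: R)
  case 0
  have "(\<Sum>j = -R..R. jtp_coeff x 0 j * y powi j) = (\<Sum>j = -R..R. if j = 0 then 1 else 0)"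
    by (intro sum.cong) (auto simp: jtp_coeff_eq_0 jtp_coeff_def qpoch_inv_def)
  also have "\<dots> = 1"
    using "0.prems" by simp
  finally show ?case
    by (simp add: jtp_prod_def)
next
  case (Suc N)
  define B where "B = x ^ (2 * N + 1)"
  define S where "S = (\<Sum>j = -R..R. jtp_coeff x N j * y powi j)"
  have "jtp_prod x y (Suc N) = jtp_prod x y N * ((1 + B * y) * (1 + B / y))"
    by (simp add: jtp_prod_Suc B_def)
  also have "\<dots> = (1 + B^2) * S + B * (y * S) + B * (S / y)"
    using Suc.IH[of R] Suc.prems y0 by (simp add: S_def field_simps power2_eq_square)
  also have "\<dots> = (1 + B^2) * S + B * (\<Sum>j = -R..R. jtp_coeff x N (j - 1) * y powi j)
      + B * (\<Sum>j = -R..R. jtp_coeff x N (j + 1) * y powi j)"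
    using jtp_coeff_sum_shifts[OF y0, of N R] Suc.prems by (simp add: S_def)
  also have "\<dots> = (\<Sum>j = -R..R. jtp_coeff x (Suc N) j * y powi j)"
  proof -
    have "4 * N + 2 = (2 * N + 1) * 2"
      by simp
    then have "x ^ (4 * N + 2) = B^2"
      by (simp only: B_def power_mult)
    then show ?thesis
      by (simp add: S_def jtp_coeff_Suc[OF x1 x0] B_def sum_distrib_left sum.distrib algebra_simps)
  qed
  finally show ?case .
qed

section \<open>Passing to the limit: Euler's pentagonal theorem\<close>

definition euler_prod :: "complex \<Rightarrow> complex" where
  "euler_prod p = (\<Prod>i. 1 - p ^ Suc i)"

lemma convergent_prod_euler:
  fixes p :: complex
  assumes "norm p < 1"
  shows "convergent_prod (\<lambda>i. 1 - p ^ Suc i)"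
proof -
  have "norm ((1 - p ^ Suc i) - 1) = norm p * norm p ^ i" for i
    by (simp add: norm_mult norm_power)
  then have "summable (\<lambda>i. norm ((1 - p ^ Suc i) - 1))"
    using assms by (simp add: summable_geometric summable_mult)
  then show ?thesis
    by (intro abs_convergent_prod_imp_convergent_prod summable_imp_abs_convergent_prod)
qed

lemma euler_prod_nonzero: "norm p < 1 \<Longrightarrow> euler_prod p \<noteq> 0"
  unfolding euler_prod_def
  by (rule prodinf_nonzero[OF convergent_prod_euler]) (simp_all add: power_neq_one_if_norm_less del: power_Suc)

lemma qpoch_tendsto: "norm p < 1 \<Longrightarrow> qpoch p \<longlonglongrightarrow> euler_prod p"
proof -
  assume p: "norm p < 1"
  have "qpoch p (Suc n) = (\<Prod>i\<le>n. 1 - p ^ Suc i)" for n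
    unfolding qpoch_def atMost_atLeast0 by (subst prod.shift_bounds_cl_Suc_ivl[symmetric]) simp
  then have "(\<lambda>n. qpoch p (Suc n)) \<longlonglongrightarrow> euler_prod p"
    using convergent_prod_LIMSEQ[OF convergent_prod_euler[OF p]] by (simp add: euler_prod_def)
  then show ?thesis
    by (rule filterlim_sequentially_Suc[THEN iffD1])
qed

lemma qpoch_inv_tendsto:
  assumes p: "norm p < 1"
  shows "(\<lambda>N::nat. qpoch_inv p (int N + j)) \<longlonglongrightarrow> 1 / euler_prod p"
proof -
  have shift: "filterlim (\<lambda>N::nat. nat (int N + j)) at_top sequentially"
    unfolding filterlim_at_top
  proof
    show "eventually (\<lambda>N. M \<le> nat (int N + j)) sequentially" for M
      unfolding eventually_sequentially by (rule exI[of _ "M + nat \<bar>j\<bar>"]) linarith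
  qed
  have "(\<lambda>N. 1 / qpoch p (nat (int N + j))) \<longlonglongrightarrow> 1 / euler_prod p"
    by (rule filterlim_compose[OF _ shift])
      (intro tendsto_divide tendsto_const qpoch_tendsto euler_prod_nonzero p)
  moreover have "eventually (\<lambda>N. 1 / qpoch p (nat (int N + j)) = qpoch_inv p (int N + j)) sequentially"
    unfolding eventually_sequentially by (rule exI[of _ "nat \<bar>j\<bar>"]) (auto simp: qpoch_inv_def)
  ultimately show ?thesis
    by (rule Lim_transform_eventually)
qed

lemma tendsto_symmetric_sum_dominated:
  fixes a :: "int \<Rightarrow> complex" and G :: "nat \<Rightarrow> int \<Rightarrow> complex"
  assumes a: "(\<lambda>j. norm (a j)) summable_on UNIV"
    and bound: "\<And>N j. norm (G N j) \<le> C"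
    and lim: "\<And>j. (\<lambda>N. G N j) \<longlonglongrightarrow> g"
  shows "(\<lambda>N. \<Sum>j = - int N..int N. G N j * a j) \<longlonglongrightarrow> g * infsum a UNIV"
proof -
  define s where "s N j = (if j \<in> {- int N..int N} then G N j * a j else 0)" for N j
  have aa: "Infinite_Set_Sum.abs_summable_on a UNIV"
    using abs_summable_equivalent a by blast
  have lim_int: "(\<lambda>N. integral\<^sup>L (count_space UNIV) (s N)) \<longlonglongrightarrow> integral\<^sup>L (count_space UNIV) (\<lambda>j. g * a j)"
  proof (rule integral_dominated_convergence[where w = "\<lambda>j. C * norm (a j)"])
    have "Infinite_Set_Sum.abs_summable_on (\<lambda>j. C * norm (a j)) UNIV"
      using aa by (intro abs_summable_on_cmult_right) simp
    then show "integrable (count_space UNIV) (\<lambda>j. C * norm (a j))"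
      unfolding Infinite_Set_Sum.abs_summable_on_def by simp
    show "AE j in count_space UNIV. (\<lambda>N. s N j) \<longlonglongrightarrow> g * a j"
    proof (rule AE_I2)
      fix j :: int
      have "eventually (\<lambda>N. G N j * a j = s N j) sequentially"
        using eventually_ge_at_top[of "nat \<bar>j\<bar>"] by eventually_elim (auto simp: s_def)
      then show "(\<lambda>N. s N j) \<longlonglongrightarrow> g * a j"
        by (rule Lim_transform_eventually[rotated]) (intro tendsto_intros lim)
    qed
    show "AE j in count_space UNIV. norm (s N j) \<le> C * norm (a j)" for N
    proof (rule AE_I2)
      show "norm (s N j) \<le> C * norm (a j)" for j
        using bound[of N j] order_trans[OF norm_ge_zero bound[of N j]]
        by (auto simp: s_def norm_mult intro: mult_right_mono)
    qed
  qed auto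
  have partial: "integral\<^sup>L (count_space UNIV) (s N) = (\<Sum>j = - int N..int N. G N j * a j)" for N
  proof -
    have "integral\<^sup>L (count_space UNIV) (s N) = infsetsum (s N) {- int N..int N}"
      unfolding infsetsum_def[symmetric] by (rule infsetsum_cong_neutral) (auto simp: s_def)
    then show ?thesis
      by (simp add: s_def)
  qed
  have limit: "integral\<^sup>L (count_space UNIV) (\<lambda>j. g * a j) = g * infsum a UNIV"
  proof -
    have "integral\<^sup>L (count_space UNIV) (\<lambda>j. g * a j) = g * infsetsum a UNIV"
      unfolding infsetsum_def[symmetric] by (rule infsetsum_cmult_right[OF aa])
    then show ?thesis
      by (simp add: infsetsum_infsum[OF aa])
  qed
  show ?thesis
    using lim_int unfolding partial limit .
qed

lemma jtp_coeff_sum_tendsto: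
  fixes x :: complex and t :: "int \<Rightarrow> complex"
  assumes x1: "norm x < 1" and x0: "x \<noteq> 0"
    and t: "(\<lambda>j. norm (x powi (j^2) * t j)) summable_on UNIV"
  shows "(\<lambda>N. qpoch (x^2) N * (\<Sum>j = - int N..int N. jtp_coeff x N j * t j))
           \<longlonglongrightarrow> (\<Sum>\<^sub>\<infinity>j. x powi (j^2) * t j)"
proof -
  define p where "p = x^2"
  have p: "norm p < 1"
    using x1 by (simp add: p_def norm_power power_less_one_iff)
  have lim_qpoch: "qpoch p \<longlonglongrightarrow> euler_prod p" and lim_inv: "(\<lambda>m. 1 / qpoch p m) \<longlonglongrightarrow> 1 / euler_prod p"
    using p by (auto intro!: tendsto_divide qpoch_tendsto euler_prod_nonzero)
  obtain K1 where "K1 > 0" and K1: "\<And>m. norm (qpoch p m) \<le> K1"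
    using convergent_imp_Bseq[OF convergentI[OF lim_qpoch]] unfolding Bseq_def by blast
  obtain K2 where "K2 > 0" and "\<And>m. norm (1 / qpoch p m) \<le> K2"
    using convergent_imp_Bseq[OF convergentI[OF lim_inv]] unfolding Bseq_def by blast
  then have K2: "\<And>m. norm (qpoch_inv p m) \<le> K2"
    by (simp add: qpoch_inv_def)
  define G where "G N j = qpoch p N * qpoch p (2 * N) * qpoch_inv p (int N + j) * qpoch_inv p (int N - j)"
    for N j
  have "norm (G N j) \<le> K1 * K1 * K2 * K2" for N j
    unfolding G_def norm_mult using \<open>K1 > 0\<close> \<open>K2 > 0\<close> by (intro mult_mono K1 K2) auto
  moreover have "(\<lambda>N. G N j) \<longlonglongrightarrow> euler_prod p * euler_prod p * (1 / euler_prod p) * (1 / euler_prod p)" for j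
  proof -
    have "(\<lambda>N. qpoch p (2 * N)) \<longlonglongrightarrow> euler_prod p"
      by (rule LIMSEQ_subseq_LIMSEQ[OF lim_qpoch, unfolded o_def]) (simp add: strict_mono_def)
    then show ?thesis
      unfolding G_def using qpoch_inv_tendsto[OF p, of j] qpoch_inv_tendsto[OF p, of "- j"]
      by (intro tendsto_mult lim_qpoch) simp_all
  qed
  moreover have "euler_prod p * euler_prod p * (1 / euler_prod p) * (1 / euler_prod p) = 1"
    using euler_prod_nonzero[OF p] by simp
  ultimately have "(\<lambda>N. \<Sum>j = - int N..int N. G N j * (x powi (j^2) * t j)) \<longlonglongrightarrow> 1 * (\<Sum>\<^sub>\<infinity>j. x powi (j^2) * t j)"
    by (intro tendsto_symmetric_sum_dominated[OF t]) auto
  moreover have "qpoch (x^2) N * (\<Sum>j = - int N..int N. jtp_coeff x N j * t j)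
      = (\<Sum>j = - int N..int N. G N j * (x powi (j^2) * t j))" for N
    unfolding sum_distrib_left G_def jtp_coeff_def p_def by (intro sum.cong) (simp_all add: mult_ac)
  ultimately show ?thesis
    by simp
qed

text \<open>With \<open>x = q\<^sup>3\<^sup>/\<^sup>2\<close> and \<open>y = -q\<^sup>1\<^sup>/\<^sup>2\<close> the \<open>k\<close>-th factors on the left are
  \<open>(1 - q\<^sup>3\<^sup>k)(1 - q\<^sup>3\<^sup>k\<^sup>-\<^sup>1)(1 - q\<^sup>3\<^sup>k\<^sup>-\<^sup>2)\<close>, which regroup into \<open>(q; q)\<^sub>3\<^sub>N\<close>.\<close>

lemma qpoch_times_jtp_prod_pentagonal:
  "qpoch (exp (3 * L) ^ 2) N * jtp_prod (exp (3 * L)) (- exp L) N = qpoch (exp (2 * L)) (3 * N)"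
proof (induction N)
  case 0
  then show ?case
    by (simp add: jtp_prod_def)
next
  case (Suc N)
  let ?x = "exp (3 * L)" and ?q = "exp (2 * L)"
  have factors: "(1 - (?x ^ 2) ^ Suc N) * ((1 + ?x ^ (2 * N + 1) * - exp L) * (1 + ?x ^ (2 * N + 1) / - exp L))
      = (1 - ?q ^ Suc (3 * N)) * (1 - ?q ^ Suc (Suc (3 * N))) * (1 - ?q ^ Suc (Suc (Suc (3 * N))))"
  proof -
    have "(?x ^ 2) ^ Suc N = ?q ^ Suc (Suc (Suc (3 * N)))"
      and "?x ^ (2 * N + 1) * exp L = ?q ^ Suc (Suc (3 * N))"
      and "?x ^ (2 * N + 1) / exp L = ?q ^ Suc (3 * N)"
      by (simp_all add: exp_add[symmetric] exp_diff[symmetric] algebra_simps flip: exp_of_nat_mult)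
    then show ?thesis
      by (simp add: algebra_simps)
  qed
  have "3 * Suc N = Suc (Suc (Suc (3 * N)))"
    by simp
  then have qpoch_3: "qpoch ?q (3 * Suc N) = qpoch ?q (3 * N)
      * ((1 - ?q ^ Suc (3 * N)) * (1 - ?q ^ Suc (Suc (3 * N))) * (1 - ?q ^ Suc (Suc (Suc (3 * N)))))"
    by (simp only: qpoch_Suc mult.assoc)
  have "qpoch (?x ^ 2) (Suc N) * jtp_prod ?x (- exp L) (Suc N)
      = (qpoch (?x ^ 2) N * jtp_prod ?x (- exp L) N)
        * ((1 - (?x ^ 2) ^ Suc N) * ((1 + ?x ^ (2 * N + 1) * - exp L) * (1 + ?x ^ (2 * N + 1) / - exp L)))"
    by (simp only: qpoch_Suc jtp_prod_Suc mult_ac)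
  also have "\<dots> = qpoch (exp (2 * L)) (3 * Suc N)"
    unfolding Suc.IH factors qpoch_3 ..
  finally show ?case .
qed

theorem euler_pentagonal:
  assumes L: "Re L < 0"
  shows "theta_sum (3 * L) (L + of_real pi * \<i>) = euler_prod (exp (2 * L))"
proof -
  define x y where "x = exp (3 * L)" and "y = - exp L"
  have x1: "norm x < 1" and x0: "x \<noteq> 0" and y0: "y \<noteq> 0"
    using L by (simp_all add: x_def y_def)
  have terms: "x powi (j^2) * y powi j = theta_term (3 * L) (L + of_real pi * \<i>) j" for j
    by (simp add: theta_term_eq_powi x_def y_def exp_add)
  have "(\<lambda>N. qpoch (x^2) N * (\<Sum>j = - int N..int N. jtp_coeff x N j * y powi j))
      \<longlonglongrightarrow> theta_sum (3 * L) (L + of_real pi * \<i>)"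
    using jtp_coeff_sum_tendsto[OF x1 x0, of "\<lambda>j. y powi j"] theta_term_abs_summable[of "3 * L"] L
    by (simp add: terms theta_sum_def mult.assoc)
  moreover have "qpoch (x^2) N * (\<Sum>j = - int N..int N. jtp_coeff x N j * y powi j)
      = qpoch (exp (2 * L)) (3 * N)" for N
    using jtp_prod_eq_sum[OF x1 x0 y0, of N "int N"] qpoch_times_jtp_prod_pentagonal[of L N]
    by (simp add: x_def y_def)
  moreover have "(\<lambda>N. qpoch (exp (2 * L)) (3 * N)) \<longlonglongrightarrow> euler_prod (exp (2 * L))"
    using L by (intro LIMSEQ_subseq_LIMSEQ[OF qpoch_tendsto, unfolded o_def]) (simp_all add: strict_mono_def)
  ultimately show ?thesis
    using LIMSEQ_unique by auto
qed

section \<open>Jacobi's identity for \<open>\<eta>\<^sup>3\<close>\<close>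

definition jtp_prod_rest :: "complex \<Rightarrow> complex \<Rightarrow> nat \<Rightarrow> complex" where
  "jtp_prod_rest x y N = (\<Prod>k = 1..N. 1 + x ^ (2 * k - 1) * y) * (\<Prod>k = 2..N. 1 + x ^ (2 * k - 1) / y)"

lemma jtp_prod_eq_rest:
  assumes "N \<ge> 1"
  shows "jtp_prod x y N = (1 + x / y) * jtp_prod_rest x y N"
proof -
  have "{1..N} = insert 1 {2..N}"
    using assms by auto
  then have "(\<Prod>k = 1..N. 1 + x ^ (2 * k - 1) / y) = (1 + x / y) * (\<Prod>k = 2..N. 1 + x ^ (2 * k - 1) / y)"
    by simp
  then show ?thesis
    by (simp add: jtp_prod_def jtp_prod_rest_def prod.distrib mult_ac)
qed

lemma jtp_prod_rest_at_minus:
  fixes x :: complex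
  assumes x0: "x \<noteq> 0" and N: "N \<ge> 1"
  shows "jtp_prod_rest x (- x) N = qpoch (x^2) N * qpoch (x^2) (N - 1)"
proof -
  have first: "(\<Prod>k = 1..N. 1 + x ^ (2 * k - 1) * - x) = qpoch (x^2) N"
    unfolding qpoch_def
  proof (rule prod.cong)
    fix k
    assume "k \<in> {1..N}"
    then have "x ^ (2 * k - 1) * x = x ^ (2 * k)"
      by (cases k) auto
    then show "1 + x ^ (2 * k - 1) * - x = 1 - (x^2) ^ k"
      by (simp add: power_mult)
  qed simp
  obtain M where M: "N = Suc M"
    using N by (cases N) auto
  have "{2..N} = {Suc 1..Suc M}"
    by (simp add: M)
  then have "(\<Prod>k = 2..N. 1 + x ^ (2 * k - 1) / - x) = (\<Prod>i = 1..M. 1 + x ^ (2 * Suc i - 1) / - x)"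
    by (simp only: prod.shift_bounds_cl_Suc_ivl)
  also have "\<dots> = qpoch (x^2) M"
    unfolding qpoch_def
  proof (rule prod.cong)
    fix i
    have "x ^ (2 * Suc i - 1) / x = x ^ (2 * i)"
      using x0 by (simp add: mult_ac)
    then show "1 + x ^ (2 * Suc i - 1) / - x = 1 - (x^2) ^ i"
      by (simp add: power_mult)
  qed simp
  finally show ?thesis
    unfolding jtp_prod_rest_def first by (simp add: M)
qed

text \<open>Differentiate the finite triple product in \<open>y\<close> at \<open>y = -x\<close>, the zero of its factor
  \<open>1 + x / y\<close>.\<close>

lemma jtp_prod_rest_eq_weighted_sum:
  fixes x :: complex
  assumes x1: "norm x < 1" and x0: "x \<noteq> 0" and N: "N \<ge> 1"
  shows "jtp_prod_rest x (- x) N = (\<Sum>j = - int N..int N. jtp_coeff x N j * (of_int j * (- x) powi j))"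
proof -
  define y0 where "y0 = - x"
  have y0: "y0 \<noteq> 0"
    using x0 by (simp add: y0_def)
  define F' where "F' = (\<Sum>j = - int N..int N. jtp_coeff x N j * (of_int j * y0 powi (j - 1)))"
  have "((\<lambda>y. jtp_coeff x N j * y powi j) has_field_derivative
      jtp_coeff x N j * (of_int j * y0 powi (j - 1))) (at y0)" for j
    using y0 by (auto intro!: derivative_eq_intros)
  then have "((\<lambda>y. \<Sum>j = - int N..int N. jtp_coeff x N j * y powi j) has_field_derivative F') (at y0)"
    unfolding F'_def by (intro DERIV_sum)
  then have dF: "((\<lambda>y. (1 + x / y) * jtp_prod_rest x y N) has_field_derivative F') (at y0)"
  proof (rule has_field_derivative_transform_within_open[where S = "- {0}"])
    show "(\<Sum>j = - int N..int N. jtp_coeff x N j * y powi j) = (1 + x / y) * jtp_prod_rest x y N"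
      if "y \<in> - {0}" for y
      using that jtp_prod_eq_sum[OF x1 x0, of y N "int N"] jtp_prod_eq_rest[OF N] by simp
  qed (use y0 in auto)
  have "(\<lambda>y. jtp_prod_rest x y N) holomorphic_on - {0}"
    unfolding jtp_prod_rest_def by (intro holomorphic_intros) auto
  then obtain D where "((\<lambda>y. jtp_prod_rest x y N) has_field_derivative D) (at y0)"
    using holomorphic_on_imp_differentiable_at[of _ "- {0}" y0] y0
    unfolding field_differentiable_def by auto
  then have "((\<lambda>y. (1 + x / y) * jtp_prod_rest x y N) has_field_derivative
      (- x / y0^2) * jtp_prod_rest x y0 N + D * (1 + x / y0)) (at y0)"
    using y0 by (auto intro!: derivative_eq_intros simp: power2_eq_square)
  with dF have "F' = (- x / y0^2) * jtp_prod_rest x y0 N + D * (1 + x / y0)"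
    by (rule DERIV_unique)
  then have "jtp_prod_rest x y0 N = y0 * F'"
    using x0 by (simp add: y0_def field_simps power2_eq_square)
  also have "\<dots> = (\<Sum>j = - int N..int N. jtp_coeff x N j * (of_int j * y0 powi j))"
    unfolding F'_def sum_distrib_left using y0
    by (intro sum.cong) (simp_all add: power_int_diff field_simps)
  finally show ?thesis
    by (simp add: y0_def)
qed

theorem jacobi_eta_cube:
  assumes L: "Re L < 0"
  shows "theta_dsum L (L + of_real pi * \<i>) = euler_prod (exp (2 * L)) ^ 3"
proof -
  define x where "x = exp L"
  have x1: "norm x < 1" and x0: "x \<noteq> 0"
    using L by (simp_all add: x_def)
  then have p: "norm (x^2) < 1"
    by (simp add: norm_power power_less_one_iff)
  have x2: "x^2 = exp (2 * L)"
    by (simp add: x_def flip: exp_of_nat_mult)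
  have terms: "x powi (j^2) * (of_int j * (- x) powi j) = of_int j * theta_term L (L + of_real pi * \<i>) j" for j
    by (simp add: theta_term_eq_powi x_def exp_add)
  let ?E = "euler_prod (x^2)"
  let ?S = "\<lambda>N. \<Sum>j = - int N..int N. jtp_coeff x N j * (of_int j * (- x) powi j)"
  have lim_sum: "(\<lambda>N. qpoch (x^2) N * ?S N) \<longlonglongrightarrow> theta_dsum L (L + of_real pi * \<i>)"
    using jtp_coeff_sum_tendsto[OF x1 x0, of "\<lambda>j. of_int j * (- x) powi j"] theta_dterm_abs_summable[OF L]
    by (simp add: terms theta_dsum_def)
  have "(\<lambda>N. qpoch (x^2) (N - 1)) \<longlonglongrightarrow> ?E"
    by (rule filterlim_sequentially_Suc[THEN iffD1]) (simp add: qpoch_tendsto[OF p])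
  then have "(\<lambda>N. qpoch (x^2) N * (qpoch (x^2) N * qpoch (x^2) (N - 1))) \<longlonglongrightarrow> ?E * (?E * ?E)"
    by (intro tendsto_mult qpoch_tendsto[OF p])
  moreover have "eventually (\<lambda>N. qpoch (x^2) N * (qpoch (x^2) N * qpoch (x^2) (N - 1))
      = qpoch (x^2) N * ?S N) sequentially"
    using eventually_ge_at_top[of 1]
  proof eventually_elim
    case (elim N)
    show ?case
      using jtp_prod_rest_at_minus[OF x0 elim] jtp_prod_rest_eq_weighted_sum[OF x1 x0 elim] by simp
  qed
  ultimately have "(\<lambda>N. qpoch (x^2) N * ?S N) \<longlonglongrightarrow> ?E * (?E * ?E)"
    by (rule Lim_transform_eventually)
  with lim_sum have "theta_dsum L (L + of_real pi * \<i>) = ?E * (?E * ?E)"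
    by (rule LIMSEQ_unique)
  then show ?thesis
    by (simp add: x2 power3_eq_cube)
qed

section \<open>Back to \<open>\<tau>\<close> and \<open>z\<close>\<close>

lemma theta3_eq_theta_sum: "theta3 z \<tau> = theta_sum (of_real pi * \<i> * \<tau>) (2 * of_real pi * \<i> * z)"
  unfolding theta3_def theta_sum_def theta_term_def qpow_def
  by (intro infsum_cong) (simp add: exp_add[symmetric] field_simps)

lemma a_lattice_eq_hex_sum: "a_lattice \<tau> = hex_sum (of_real pi * \<i> * \<tau>)"
  unfolding a_lattice_def hex_sum_def qpow_def
  by (intro infsum_cong) (simp add: case_prod_unfold algebra_simps)

lemma dedekind_eta_eq_euler_prod:
  "dedekind_eta \<tau> = exp (of_real pi * \<i> * \<tau> / 12) * euler_prod (exp (2 * (of_real pi * \<i> * \<tau>)))"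
proof -
  have "qpow \<tau> (of_nat (Suc n)) = exp (2 * (of_real pi * \<i> * \<tau>)) ^ Suc n" for n
    unfolding qpow_def exp_of_nat_mult[symmetric] by (simp add: algebra_simps)
  moreover have "qpow \<tau> (1/24) = exp (of_real pi * \<i> * \<tau> / 12)"
    unfolding qpow_def by (simp add: field_simps)
  ultimately show ?thesis
    by (simp add: dedekind_eta_def euler_prod_def)
qed

text \<open>The pentagonal exponents: \<open>(6n + 1)\<^sup>2 / 24 = 1 / 24 + 3 n\<^sup>2 / 2 + n / 2\<close>.\<close>

lemma eta_numerator_eq_theta:
  assumes L: "L = of_real pi * \<i> * \<tau>" and neg: "Re L < 0"
  shows "(\<Sum>\<^sub>\<infinity>n::int. (-1) ^ nat \<bar>n\<bar> * of_int (6*n+1) * qpow \<tau> (of_int ((6*n+1)^2) / 24))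
       = exp (L / 12) * (theta_sum (3 * L) (L + of_real pi * \<i>) + 6 * theta_dsum (3 * L) (L + of_real pi * \<i>))"
proof -
  let ?e = "theta_term (3 * L) (L + of_real pi * \<i>)"
  have K: "Re (3 * L) < 0"
    using neg by simp
  have "(-1) ^ nat \<bar>n\<bar> * of_int (6*n+1) * qpow \<tau> (of_int ((6*n+1)^2) / 24)
      = exp (L / 12) * (?e n + 6 * (of_int n * ?e n))" for n :: int
  proof -
    have "(-1::complex) ^ nat \<bar>n\<bar> = exp (of_int n * (of_real pi * \<i>))"
      by (cases "n \<ge> 0") (simp_all add: exp_of_nat_mult[symmetric] power_int_def exp_minus
          flip: exp_power_int)
    moreover have "of_int n * (of_real pi * \<i>) + 2 * of_real pi * \<i> * (of_int ((6*n+1)^2) / 24) * \<tau>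
        = L / 12 + (of_int n ^ 2 * (3 * L) + of_int n * (L + of_real pi * \<i>))"
      unfolding L by (simp add: field_simps power2_eq_square)
    ultimately have "(-1) ^ nat \<bar>n\<bar> * qpow \<tau> (of_int ((6*n+1)^2) / 24) = exp (L / 12) * ?e n"
      unfolding qpow_def theta_term_def by (simp add: exp_add[symmetric])
    then show ?thesis
      by (simp add: algebra_simps)
  qed
  then have "(\<Sum>\<^sub>\<infinity>n::int. (-1) ^ nat \<bar>n\<bar> * of_int (6*n+1) * qpow \<tau> (of_int ((6*n+1)^2) / 24))
      = exp (L / 12) * (\<Sum>\<^sub>\<infinity>n. ?e n + 6 * (of_int n * ?e n))"
    by (simp add: infsum_cmult_right')
  also have "(\<Sum>\<^sub>\<infinity>n. ?e n + 6 * (of_int n * ?e n)) = infsum ?e UNIV + 6 * (\<Sum>\<^sub>\<infinity>n. of_int n * ?e n)"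
    using abs_summable_summable[OF theta_term_abs_summable[OF K]]
      abs_summable_summable[OF theta_dterm_abs_summable[OF K]]
    by (simp add: infsum_add summable_on_cmult_right infsum_cmult_right')
  finally show ?thesis
    by (simp add: theta_sum_def theta_dsum_def)
qed

lemma theta3_cubic_identity:
  assumes "Im \<tau> > 0"
  shows "theta3 z (3 * \<tau>) ^ 3
           + qpow \<tau> (1/2) * exp (2 * pi * \<i> * z) * theta3 (z + \<tau>) (3 * \<tau>) ^ 3
           + qpow \<tau> 2 * exp (2 * pi * \<i> * z) ^ 2 * theta3 (z + 2 * \<tau>) (3 * \<tau>) ^ 3
         = a_lattice \<tau> * theta3 z \<tau>"
proof -
  define L M where "L = of_real pi * \<i> * \<tau>" and "M = 2 * of_real pi * \<i> * z"
  have "Re L < 0"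
    using assms by (simp add: L_def)
  moreover have "theta3 z (3 * \<tau>) = theta_sum (3 * L) M"
    and "theta3 (z + \<tau>) (3 * \<tau>) = theta_sum (3 * L) (M + 2 * L)"
    and "theta3 (z + 2 * \<tau>) (3 * \<tau>) = theta_sum (3 * L) (M + 4 * L)"
    and "theta3 z \<tau> = theta_sum L M"
    by (simp_all add: theta3_eq_theta_sum L_def M_def algebra_simps)
  moreover have "qpow \<tau> (1/2) * exp (2 * pi * \<i> * z) = exp (L + M)"
    and "qpow \<tau> 2 * exp (2 * pi * \<i> * z) ^ 2 = exp (4 * L + 2 * M)"
    by (simp_all add: qpow_def L_def M_def algebra_simps flip: exp_add exp_of_nat_mult)
  ultimately show ?thesis
    using theta_cubic_identity[of L M] by (simp add: a_lattice_eq_hex_sum L_def mult.commute)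
qed

lemma a_eta_eq_a_lattice:
  assumes "Im \<tau> > 0"
  shows "a_eta \<tau> = a_lattice \<tau>"
proof -
  define L where "L = of_real pi * \<i> * \<tau>"
  define E T D where "E = euler_prod (exp (2 * L))"
    and "T = theta_sum (3 * L) (L + of_real pi * \<i>)" and "D = theta_dsum (3 * L) (L + of_real pi * \<i>)"
  have L: "Re L < 0"
    using assms by (simp add: L_def)
  have E: "E \<noteq> 0"
    using L by (simp add: E_def euler_prod_nonzero)
  have "E^2 * (T + 6 * D) = E^2 * (E * hex_sum L)"
    using theta_half_period_identity[OF L] euler_pentagonal[OF L] jacobi_eta_cube[OF L]
    by (simp add: E_def T_def D_def power3_eq_cube power2_eq_square mult_ac)
  then have "T + 6 * D = E * hex_sum L"
    using E by simp
  then show ?thesis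
    using E eta_numerator_eq_theta[OF L_def L]
    by (simp add: a_eta_def dedekind_eta_eq_euler_prod a_lattice_eq_hex_sum T_def D_def
        flip: E_def L_def)
qed

theorem lemma49:
  fixes tau z :: complex
  assumes "Im tau > 0"
  shows "theta3 z (3*tau) ^ 3
           + qpow tau (1/2) * exp (2*pi*\<i>*z) * theta3 (z + tau) (3*tau) ^ 3
           + qpow tau 2 * exp (2*pi*\<i>*z) ^ 2 * theta3 (z + 2*tau) (3*tau) ^ 3
         = a_eta tau * theta3 z tau
       \<and> a_eta tau = a_lattice tau"
  using theta3_cubic_identity[OF assms] a_eta_eq_a_lattice[OF assms] by simp

end
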